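(* In the setting described in the context, let $\mathcal L_\tau(\theta)=\mathcal L(\theta)+\frac\tau2\|\theta\|_2^2$ with $\tau=c_\tau\min\{\kappa_1/\kappa_2,1/(\kappa_3\sqrt{d+1})\}\sqrt{\log n/(nL)}$ for a constant $c_\tau>0$. Then with probability at least $1-O(n^{-10})$, $$\|[\nabla\mathcal L_\tau(\theta^* )]_{1:n}\|_\infty\lesssim\sqrt{\frac{np\log n}{L}},\qquad\|[\nabla\mathcal L_\tau(\theta^* )]_{n+1:n+d}\|_2\lesssim\sqrt{\frac{(d+1)np\log n}{L}}.$$
   Context: Setting. Items $1,\dots,n$ have fixed covariates $x_1,\dots,x_n\in\mathbb R^d$, $d<n$, rescaled so $\|x_i\|_2\le\sqrt{(d+1)/n}$; $\tilde x_i=(e_i^\top,x_i^\top)^\top\in\mathbb R^{n+d}$, $e_i$ canonical in $\mathbb R^n$; $\theta=(\alpha^\top,\beta^\top)^\top$. True $\theta^*=(\alpha^{*\top},\beta^{*\top})^\top$. Erdős–Rényi comparison graph $\mathcal G=([n],\mathcal E)$, edge probability $p$; for each edge and $l\in[L]$, independent $y^{(l)}_{j,i}\in\{0,1\}$ with $P(y^{(l)}_{j,i}=1)=\phi(\tilde x_i^\top\theta^*-\tilde x_j^\top\theta^* )$, $\phi(t)=e^t/(1+e^t)$, $y^{(l)}_{i,j}=1-y^{(l)}_{j,i}$, $y_{j,i}=L^{-1}\sum_ly^{(l)}_{j,i}$. $\mathcal L(\theta)=\sum_{(i,j)\in\mathcal E,i>j}\{-y_{j,i}(\tilde x_i^\top\theta-\tilde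 x_j^\top\theta)+\log(1+e^{\tilde x_i^\top\theta-\tilde x_j^\top\theta})\}$. Assumption: $\Sigma=\sum_{j<i}(\tilde x_i-\tilde x_j)(\tilde x_i-\tilde x_j)^\top$ has $\|\Sigma\|\le c_1n$. Standing assumption: $pn>c_p\log n$ for a constant $c_p>0$, $n$ large. $\kappa_1=\exp(\max_{i,j}(\tilde x_i^\top\theta^*-\tilde x_j^\top\theta^* ))$, $\kappa_2=\max_i|\alpha_i^*|$, $\kappa_3=\|\theta^*\|_2/\sqrt n$. $a\lesssim b$: $a\le Cb$ with $C$ independent of $n,p,L,d,\kappa$'s. *)

theory Defs
  imports "HOL-Probability.Probability"
begin

text \<open>Items are indexed 0..n-1; covariates x i k (k < d); a parameter vector
theta :: nat => real is read on indices 0..n+d-1, with alpha_i = theta i (i<n)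
and beta_k = theta (n+k) (k<d).\<close>

definition logistic :: "real \<Rightarrow> real" where
  "logistic t = exp t / (1 + exp t)"

definition score :: "nat \<Rightarrow> nat \<Rightarrow> (nat \<Rightarrow> nat \<Rightarrow> real) \<Rightarrow> (nat \<Rightarrow> real) \<Rightarrow> nat \<Rightarrow> real" where
  "score n d x \<theta> i = \<theta> i + (\<Sum>k<d. x i k * \<theta> (n + k))"

definition pairs :: "nat \<Rightarrow> (nat \<times> nat) set" where
  "pairs n = {(i, j). j < i \<and> i < n}"

text \<open>Y (i,j,l) = True means y^(l)_{j,i} = 1; ybar gives y_{j,i}\<close>
definition ybar :: "nat \<Rightarrow> (nat \<times> nat \<times> nat \<Rightarrow> bool) \<Rightarrow> nat \<Rightarrow> nat \<Rightarrow> real" where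
  "ybar L Y i j = (\<Sum>l<L. if Y (i, j, l) then 1 else 0) / real L"

definition BTL_loss :: "nat \<Rightarrow> nat \<Rightarrow> (nat \<Rightarrow> nat \<Rightarrow> real) \<Rightarrow> nat \<Rightarrow>
    (nat \<times> nat \<Rightarrow> bool) \<Rightarrow> (nat \<times> nat \<times> nat \<Rightarrow> bool) \<Rightarrow> (nat \<Rightarrow> real) \<Rightarrow> real" where
  "BTL_loss n d x L E Y \<theta> =
     (\<Sum>(i, j)\<in>pairs n. if E (i, j) then
        - ybar L Y i j * (score n d x \<theta> i - score n d x \<theta> j)
        + ln (1 + exp (score n d x \<theta> i - score n d x \<theta> j))
      else 0)"

definition reg_loss :: "nat \<Rightarrow> nat \<Rightarrow> (nat \<Rightarrow> nat \<Rightarrow> real) \<Rightarrow> nat \<Rightarrow> real \<Rightarrow>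
    (nat \<times> nat \<Rightarrow> bool) \<Rightarrow> (nat \<times> nat \<times> nat \<Rightarrow> bool) \<Rightarrow> (nat \<Rightarrow> real) \<Rightarrow> real" where
  "reg_loss n d x L \<tau> E Y \<theta> = BTL_loss n d x L E Y \<theta> + \<tau> / 2 * (\<Sum>a<n+d. (\<theta> a)\<^sup>2)"

definition grad_comp :: "((nat \<Rightarrow> real) \<Rightarrow> real) \<Rightarrow> (nat \<Rightarrow> real) \<Rightarrow> nat \<Rightarrow> real" where
  "grad_comp F \<theta> a = deriv (\<lambda>t. F (\<theta>(a := t))) (\<theta> a)"

text \<open>Joint law of the Erdos-Renyi graph (edge indicators on pairs) and all
comparison outcomes (drawn for every pair, used only on edges).\<close>
definition sample_pmf :: "nat \<Rightarrow> nat \<Rightarrow> (nat \<Rightarrow> nat \<Rightarrow> real) \<Rightarrow> (nat \<Rightarrow> real) \<Rightarrow> real \<Rightarrow> nat \<Rightarrow>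
    ((nat \<times> nat \<Rightarrow> bool) \<times> (nat \<times> nat \<times> nat \<Rightarrow> bool)) pmf" where
  "sample_pmf n d x \<theta> p L =
     pair_pmf (Pi_pmf (pairs n) False (\<lambda>_. bernoulli_pmf p))
              (Pi_pmf {(i, j, l). (i, j) \<in> pairs n \<and> l < L} False
                 (\<lambda>(i, j, l). bernoulli_pmf (logistic (score n d x \<theta> i - score n d x \<theta> j))))"

definition kappa1 :: "nat \<Rightarrow> nat \<Rightarrow> (nat \<Rightarrow> nat \<Rightarrow> real) \<Rightarrow> (nat \<Rightarrow> real) \<Rightarrow> real" where
  "kappa1 n d x \<theta> = exp (Max {score n d x \<theta> i - score n d x \<theta> j | i j. i < n \<and> j < n})"

definition kappa2 :: "nat \<Rightarrow> (nat \<Rightarrow> real) \<Rightarrow> real" where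
  "kappa2 n \<theta> = Max {\<bar>\<theta> i\<bar> | i. i < n}"

definition kappa3 :: "nat \<Rightarrow> nat \<Rightarrow> (nat \<Rightarrow> real) \<Rightarrow> real" where
  "kappa3 n d \<theta> = sqrt (\<Sum>a<n+d. (\<theta> a)\<^sup>2) / sqrt (real n)"

text \<open>tau = c_tau * min(kappa1/kappa2, 1/(kappa3 sqrt(d+1))) * sqrt(log n/(nL)),
with a ratio whose denominator is 0 read as +infinity (dropped from the min);
if theta = 0 both are infinite, and tau is set to 0 (irrelevant: tau*theta = 0).\<close>
definition tau_val :: "real \<Rightarrow> nat \<Rightarrow> nat \<Rightarrow> (nat \<Rightarrow> nat \<Rightarrow> real) \<Rightarrow> (nat \<Rightarrow> real) \<Rightarrow> nat \<Rightarrow> real" where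
  "tau_val c n d x \<theta> L =
    (let k1 = kappa1 n d x \<theta>; k2 = kappa2 n \<theta>; k3 = kappa3 n d \<theta>;
         r2 = 1 / (k3 * sqrt (real d + 1));
         m = (if k2 = 0 \<and> k3 = 0 then 0
              else if k2 = 0 then r2
              else if k3 = 0 then k1 / k2
              else min (k1 / k2) r2)
     in c * m * sqrt (ln (real n) / (real n * real L)))"

end

theory Submission
  imports Defs
begin

text \<open>
  Coordinate \<open>a\<close> of the gradient of the regularised loss at \<open>\<theta>*\<close> is a noise term
  \<open>\<Sum>\<close> over the edges \<open>(i, j)\<close> of \<open>(\<phi>(s\<^sub>i - s\<^sub>j) - y\<^sub>j\<^sub>i) w\<^sub>a(i, j)\<close>, with the fixed
  weights \<open>w\<^sub>a(i, j) = \<partial>\<^sub>a(s\<^sub>i - s\<^sub>j)\<close>, plus \<open>\<tau> \<theta>*\<^sub>a\<close>. Conditionally on the graph, the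
  \<open>L\<close> comparisons on an edge are independent centred Bernoulli variables, so Hoeffding's lemma
  bounds the moment generating function of an edge by \<open>exp (\<lambda>\<^sup>2 w\<^sup>2 / (2 L))\<close>, and averaging
  over the independent edges of the Erdos-Renyi graph costs only a factor \<open>p\<close> in the exponent.
  A Chernoff bound then shows that the noise exceeds a fixed multiple of \<open>sqrt (p V log n / L)\<close>
  only with probability \<open>n\<^sup>-\<^sup>1\<^sup>2\<close>, where \<open>V = \<Sum> w\<^sub>a\<^sup>2 + n\<close>, and a union bound over the
  \<open>n + d\<close> coordinates and both signs leaves probability \<open>4 n\<^sup>-\<^sup>1\<^sup>0\<close>. For an item coordinate
  \<open>V \<le> 3 n\<close>; for the covariate block the bound \<open>\<parallel>x\<^sub>i\<parallel>\<^sup>2 \<le> (d + 1) / n\<close> gives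
  \<open>\<Sum>\<^sub>k V\<^sub>n\<^sub>+\<^sub>k \<le> 5 n (d + 1)\<close>, which controls the Euclidean norm. Finally, the choice of \<open>\<tau>\<close>
  makes \<open>\<bar>\<tau>\<bar> \<parallel>\<theta>*\<parallel> \<le> c\<^sub>\<tau> sqrt (log n / L)\<close>, which is dominated by both bounds.
\<close>

section \<open>Concentration of the comparison noise\<close>

lemma bernoulli_centered_mgf_le:
  fixes q c :: real
  assumes q: "0 \<le> q" "q \<le> 1"
  shows "(\<integral>\<^sup>+b. ennreal (exp (c * (q - of_bool b))) \<partial>bernoulli_pmf q) \<le> ennreal (exp (c\<^sup>2 / 2))"
proof (cases "c = 0")
  case True
  then show ?thesis
    using q by (simp add: ennreal_plus[symmetric] del: ennreal_plus)
next
  case False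
  interpret interval_bounded_random_variable "measure_pmf (bernoulli_pmf q)"
    "\<lambda>b. sgn c * (q - of_bool b)" "-1" "1"
    using q by unfold_locales (auto intro!: AE_pmfI simp: sgn_if)
  have "measure_pmf.expectation (bernoulli_pmf q) (\<lambda>b. sgn c * (q - of_bool b)) = 0"
    using q by (simp add: algebra_simps)
  then have "(\<integral>\<^sup>+b. ennreal (exp (\<bar>c\<bar> * (sgn c * (q - of_bool b)))) \<partial>bernoulli_pmf q)
      \<le> ennreal (exp (\<bar>c\<bar>\<^sup>2 * (1 - - 1)\<^sup>2 / 8))"
    using False by (intro Hoeffdings_lemma_nn_integral_0) auto
  moreover have "\<bar>c\<bar> * (sgn c * r) = c * r" for r :: real
    by (simp add: abs_mult_sgn mult.assoc[symmetric])
  ultimately show ?thesis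
    by simp
qed

lemma bernoulli_mgf_le:
  fixes p u :: real
  assumes "0 \<le> p" "p \<le> 1" "0 \<le> u" "u \<le> 1"
  shows "(\<integral>\<^sup>+b. ennreal (exp (u * of_bool b)) \<partial>bernoulli_pmf p) \<le> ennreal (exp (2 * p * u))"
proof -
  have "exp u \<le> 1 + u + u\<^sup>2"
    using exp_bound assms by auto
  also have "\<dots> \<le> 1 + 2 * u"
    using assms by (simp add: power2_eq_square mult_left_le)
  finally have "exp u * p + (1 - p) \<le> 1 + 2 * p * u"
    using assms mult_right_mono[of "exp u" "1 + 2 * u" p] by (simp add: algebra_simps)
  also have "\<dots> \<le> exp (2 * p * u)"
    by (rule exp_ge_add_one_self)
  finally show ?thesis
    using assms
    by (simp add: ennreal_plus[symmetric] ennreal_mult[symmetric] ennreal_leI del: ennreal_plus)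
qed

definition trials :: "(nat \<times> nat) set \<Rightarrow> nat \<Rightarrow> (nat \<times> nat \<times> nat) set" where
  "trials P L = {(i, j, l). (i, j) \<in> P \<and> l < L}"

lemma trials_eq_image: "trials P L = (\<lambda>((i, j), l). (i, j, l)) ` (P \<times> {..<L})"
  unfolding trials_def by force

lemma finite_trials: "finite P \<Longrightarrow> finite (trials P L)"
  unfolding trials_eq_image by simp

lemma sum_trials:
  assumes "finite P"
  shows "(\<Sum>(i, j, l)\<in>trials P L. f i j l) = (\<Sum>(i, j)\<in>P. \<Sum>l<L. f i j l)"
proof -
  have "inj_on (\<lambda>((i, j), l). (i, j, l)) (P \<times> {..<L})"
    by (auto simp: inj_on_def)
  from sum.reindex[OF this, of "\<lambda>(i, j, l). f i j l"]
  have "(\<Sum>(i, j, l)\<in>trials P L. f i j l) = (\<Sum>((i, j), l)\<in>P \<times> {..<L}. f i j l)"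
    unfolding trials_eq_image comp_def by (simp add: case_prod_beta)
  also have "\<dots> = (\<Sum>(i, j)\<in>P. \<Sum>l<L. f i j l)"
    by (simp add: sum.cartesian_product case_prod_beta)
  finally show ?thesis .
qed

definition comparison_pmf :: "(nat \<times> nat) set \<Rightarrow> real \<Rightarrow> nat \<Rightarrow> (nat \<times> nat \<Rightarrow> real) \<Rightarrow>
    ((nat \<times> nat \<Rightarrow> bool) \<times> (nat \<times> nat \<times> nat \<Rightarrow> bool)) pmf" where
  "comparison_pmf P p L q =
     pair_pmf (Pi_pmf P False (\<lambda>_. bernoulli_pmf p))
              (Pi_pmf (trials P L) False (\<lambda>(i, j, l). bernoulli_pmf (q (i, j))))"

definition comparison_noise :: "(nat \<times> nat) set \<Rightarrow> (nat \<times> nat \<Rightarrow> real) \<Rightarrow> nat \<Rightarrow>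
    (nat \<times> nat \<Rightarrow> real) \<Rightarrow> (nat \<times> nat \<Rightarrow> bool) \<Rightarrow> (nat \<times> nat \<times> nat \<Rightarrow> bool) \<Rightarrow> real" where
  "comparison_noise P q L w E Y =
     (\<Sum>(i, j)\<in>P. if E (i, j) then (q (i, j) - ybar L Y i j) * w (i, j) else 0)"

definition trial_noise :: "(nat \<times> nat \<Rightarrow> real) \<Rightarrow> nat \<Rightarrow> (nat \<times> nat \<Rightarrow> real) \<Rightarrow>
    (nat \<times> nat \<Rightarrow> bool) \<Rightarrow> nat \<times> nat \<times> nat \<Rightarrow> bool \<Rightarrow> real" where
  "trial_noise q L w E t b =
     (case t of (i, j, l) \<Rightarrow> if E (i, j) then (q (i, j) - of_bool b) * w (i, j) / L else 0)"

lemma comparison_noise_uminus: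
  "comparison_noise P q L (\<lambda>e. - w e) E Y = - comparison_noise P q L w E Y"
  unfolding comparison_noise_def
  by (simp add: sum_negf[symmetric] case_prod_beta if_distrib cong: if_cong)

lemma comparison_noise_eq_sum_trial_noise:
  assumes "finite P" "L \<ge> 1"
  shows "comparison_noise P q L w E Y = (\<Sum>t\<in>trials P L. trial_noise q L w E t (Y t))"
proof -
  have "(q (i, j) - ybar L Y i j) * w (i, j)
      = (\<Sum>l<L. (q (i, j) - of_bool (Y (i, j, l))) * w (i, j) / L)"
    for i j
    using assms(2) by (simp add: ybar_def sum_subtractf sum_divide_distrib[symmetric]
        sum_distrib_right[symmetric] sum_distrib_left[symmetric] of_bool_def field_simps)
  then have "comparison_noise P q L w E Y
      = (\<Sum>(i, j)\<in>P. \<Sum>l<L. trial_noise q L w E (i, j, l) (Y (i, j, l)))"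
    unfolding comparison_noise_def trial_noise_def by (intro sum.cong refl) auto
  also have "\<dots> = (\<Sum>(i, j, l)\<in>trials P L. trial_noise q L w E (i, j, l) (Y (i, j, l)))"
    by (rule sum_trials[OF assms(1), symmetric])
  finally show ?thesis
    by (simp add: case_prod_beta)
qed

lemma comparison_outcomes_mgf_le:
  fixes lam :: real
  assumes fin: "finite P" and L: "L \<ge> 1" and q: "\<forall>e\<in>P. 0 \<le> q e \<and> q e \<le> 1"
  shows "(\<integral>\<^sup>+Y. ennreal (exp (lam * comparison_noise P q L w E Y))
            \<partial>Pi_pmf (trials P L) False (\<lambda>(i, j, l). bernoulli_pmf (q (i, j))))
      \<le> (\<Prod>e\<in>P. ennreal (exp (lam\<^sup>2 * (w e)\<^sup>2 / (2 * real L) * of_bool (E e))))"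
proof -
  let ?Y = "Pi_pmf (trials P L) False (\<lambda>(i, j, l). bernoulli_pmf (q (i, j)))"
  have "(\<integral>\<^sup>+Y. ennreal (exp (lam * comparison_noise P q L w E Y)) \<partial>?Y)
      = (\<integral>\<^sup>+Y. (\<Prod>t\<in>trials P L. ennreal (exp (lam * trial_noise q L w E t (Y t)))) \<partial>?Y)"
    by (simp add: comparison_noise_eq_sum_trial_noise[OF fin L] finite_trials[OF fin]
        prod_ennreal exp_sum sum_distrib_left)
  also have "\<dots> = (\<Prod>t\<in>trials P L.
      \<integral>\<^sup>+b. ennreal (exp (lam * trial_noise q L w E t b)) \<partial>(\<lambda>(i, j, l). bernoulli_pmf (q (i, j))) t)"
    by (rule nn_integral_prod_Pi_pmf[OF finite_trials[OF fin]])
  also have "\<dots> \<le> (\<Prod>t\<in>trials P L.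
      ennreal (exp ((\<lambda>(i, j, l). (lam * w (i, j) / L)\<^sup>2 / 2 * of_bool (E (i, j))) t)))"
  proof (intro prod_mono_ennreal)
    fix t assume "t \<in> trials P L"
    then obtain i j l where t: "t = (i, j, l)" and "(i, j) \<in> P"
      unfolding trials_def by auto
    show "(\<integral>\<^sup>+b. ennreal (exp (lam * trial_noise q L w E t b))
          \<partial>(\<lambda>(i, j, l). bernoulli_pmf (q (i, j))) t)
        \<le> ennreal (exp ((\<lambda>(i, j, l). (lam * w (i, j) / L)\<^sup>2 / 2 * of_bool (E (i, j))) t))"
    proof (cases "E (i, j)")
      case True
      have "lam * trial_noise q L w E t b = lam * w (i, j) / L * (q (i, j) - of_bool b)" for b
        using True by (simp add: trial_noise_def t)
      then show ?thesis
        using bernoulli_centered_mgf_le[of "q (i, j)" "lam * w (i, j) / L"] q \<open>(i, j) \<in> P\<close> True t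
        by simp
    next
      case False
      then show ?thesis
        by (simp add: trial_noise_def t measure_pmf.emeasure_space_1)
    qed
  qed
  also have "\<dots> = ennreal (exp
      (\<Sum>(i, j, l)\<in>trials P L. (lam * w (i, j) / L)\<^sup>2 / 2 * of_bool (E (i, j))))"
    by (simp add: finite_trials[OF fin] prod_ennreal exp_sum case_prod_unfold)
  also have "(\<Sum>(i, j, l)\<in>trials P L. (lam * w (i, j) / L)\<^sup>2 / 2 * of_bool (E (i, j)))
      = (\<Sum>e\<in>P. lam\<^sup>2 * (w e)\<^sup>2 / (2 * real L) * of_bool (E e))"
    unfolding sum_trials[OF fin]
    using L by (intro sum.cong refl) (auto simp: power2_eq_square field_simps)
  also have "ennreal (exp \<dots>) = (\<Prod>e\<in>P. ennreal (exp (lam\<^sup>2 * (w e)\<^sup>2 / (2 * real L) * of_bool (E e))))"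
    by (simp add: fin prod_ennreal exp_sum)
  finally show ?thesis .
qed

lemma comparison_noise_mgf_le:
  fixes lam :: real and L :: nat
  assumes fin: "finite P" and L: "L \<ge> 1" and p: "0 \<le> p" "p \<le> 1"
    and q: "\<forall>e\<in>P. 0 \<le> q e \<and> q e \<le> 1" and w: "\<forall>e\<in>P. lam\<^sup>2 * (w e)\<^sup>2 \<le> L"
  shows "(\<integral>\<^sup>+z. ennreal (exp (lam * case_prod (comparison_noise P q L w) z)) \<partial>comparison_pmf P p L q)
      \<le> ennreal (exp (p * lam\<^sup>2 * (\<Sum>e\<in>P. (w e)\<^sup>2) / L))"
proof -
  have "(\<integral>\<^sup>+z. ennreal (exp (lam * case_prod (comparison_noise P q L w) z)) \<partial>comparison_pmf P p L q)
      \<le> (\<integral>\<^sup>+E. (\<Prod>e\<in>P. ennreal (exp (lam\<^sup>2 * (w e)\<^sup>2 / (2 * real L) * of_bool (E e))))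
            \<partial>Pi_pmf P False (\<lambda>_. bernoulli_pmf p))"
    unfolding comparison_pmf_def nn_integral_pair_pmf' case_prod_conv
    by (intro nn_integral_mono comparison_outcomes_mgf_le[OF fin L q])
  also have "\<dots> = (\<Prod>e\<in>P.
      \<integral>\<^sup>+b. ennreal (exp (lam\<^sup>2 * (w e)\<^sup>2 / (2 * real L) * of_bool b)) \<partial>bernoulli_pmf p)"
    by (rule nn_integral_prod_Pi_pmf[OF fin])
  also have "\<dots> \<le> (\<Prod>e\<in>P. ennreal (exp (2 * p * (lam\<^sup>2 * (w e)\<^sup>2 / (2 * real L)))))"
    using w L by (intro prod_mono_ennreal bernoulli_mgf_le p) auto
  also have "\<dots> = ennreal (exp (p * lam\<^sup>2 * (\<Sum>e\<in>P. (w e)\<^sup>2) / L))"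
    using L by (simp add: fin prod_ennreal exp_sum sum_distrib_left sum_divide_distrib mult.assoc)
  finally show ?thesis .
qed

lemma comparison_noise_tail_le:
  fixes lam t :: real and L :: nat
  assumes fin: "finite P" and L: "L \<ge> 1" and p: "0 \<le> p" "p \<le> 1"
    and q: "\<forall>e\<in>P. 0 \<le> q e \<and> q e \<le> 1" and w: "\<forall>e\<in>P. lam\<^sup>2 * (w e)\<^sup>2 \<le> L" and lam: "lam > 0"
  shows "measure_pmf.prob (comparison_pmf P p L q) {(E, Y). t \<le> comparison_noise P q L w E Y}
      \<le> exp (- lam * t + p * lam\<^sup>2 * (\<Sum>e\<in>P. (w e)\<^sup>2) / L)"
proof -
  let ?M = "comparison_pmf P p L q" and ?S = "case_prod (comparison_noise P q L w)"
  have "emeasure ?M {z \<in> UNIV. ?S z \<ge> t}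
      \<le> ennreal (exp (- lam * t)) * (\<integral>\<^sup>+z. ennreal (exp (lam * ?S z)) * indicator UNIV z \<partial>?M)"
    using lam by (intro Chernoff_ineq_nn_integral_ge) auto
  also have "\<dots> \<le> ennreal (exp (- lam * t)) * ennreal (exp (p * lam\<^sup>2 * (\<Sum>e\<in>P. (w e)\<^sup>2) / L))"
    using comparison_noise_mgf_le[OF fin L p q w] by (simp add: mult_left_mono)
  also have "\<dots> = ennreal (exp (- lam * t + p * lam\<^sup>2 * (\<Sum>e\<in>P. (w e)\<^sup>2) / L))"
    by (simp add: exp_add[symmetric] ennreal_mult[symmetric])
  finally show ?thesis
    by (simp add: measure_pmf.emeasure_eq_measure case_prod_unfold)
qed

lemma comparison_noise_tail_exp:
  fixes a0 g V :: real and L :: nat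
  assumes fin: "finite P" and L: "L \<ge> 1" and p: "0 < p" "p \<le> 1"
    and q: "\<forall>e\<in>P. 0 \<le> q e \<and> q e \<le> 1" and a0: "0 < a0" "a0 \<le> 1" and g: "0 < g"
    and V: "0 < V" "(\<Sum>e\<in>P. (w e)\<^sup>2) \<le> V" and w: "\<forall>e\<in>P. a0\<^sup>2 * g * (w e)\<^sup>2 \<le> p * V"
  shows "measure_pmf.prob (comparison_pmf P p L q)
      {(E, Y). 13 / a0 * sqrt (p * V * g / L) \<le> comparison_noise P q L w E Y} \<le> exp (- 12 * g)"
proof -
  \<comment> \<open>This makes the linear term of the Chernoff exponent \<open>13 g\<close> and the quadratic one at most \<open>g\<close>.\<close>
  define lam where "lam = a0 * sqrt (L * g / (p * V))"
  have Lpos: "real L > 0"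
    using L by simp
  have lam2: "lam\<^sup>2 = a0\<^sup>2 * g * L / (p * V)"
    unfolding lam_def using g p V Lpos by (simp add: power_mult_distrib)
  have "lam > 0"
    unfolding lam_def using a0 g p V Lpos by simp
  moreover have "\<forall>e\<in>P. lam\<^sup>2 * (w e)\<^sup>2 \<le> L"
  proof
    fix e assume "e \<in> P"
    then have "a0\<^sup>2 * g * (w e)\<^sup>2 * L \<le> p * V * L"
      using w Lpos by (intro mult_right_mono) auto
    then show "lam\<^sup>2 * (w e)\<^sup>2 \<le> L"
      unfolding lam2 using p V by (simp add: field_simps)
  qed
  ultimately have "measure_pmf.prob (comparison_pmf P p L q)
      {(E, Y). 13 / a0 * sqrt (p * V * g / L) \<le> comparison_noise P q L w E Y}
      \<le> exp (- lam * (13 / a0 * sqrt (p * V * g / L)) + p * lam\<^sup>2 * (\<Sum>e\<in>P. (w e)\<^sup>2) / L)"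
    using p by (intro comparison_noise_tail_le[OF fin L _ _ q]) auto
  also have "\<dots> \<le> exp (- 12 * g)"
  proof -
    have "lam * (13 / a0 * sqrt (p * V * g / L))
        = 13 * (sqrt (L * g / (p * V)) * sqrt (p * V * g / L))"
      unfolding lam_def using a0 by simp
    also have "sqrt (L * g / (p * V)) * sqrt (p * V * g / L)
        = sqrt (L * g / (p * V) * (p * V * g / L))"
      by (rule real_sqrt_mult[symmetric])
    also have "L * g / (p * V) * (p * V * g / L) = g\<^sup>2"
      using p V Lpos by (simp add: field_simps power2_eq_square)
    finally have "lam * (13 / a0 * sqrt (p * V * g / L)) = 13 * g"
      using g by simp
    moreover have "p * lam\<^sup>2 * (\<Sum>e\<in>P. (w e)\<^sup>2) / L = a0\<^sup>2 * g * ((\<Sum>e\<in>P. (w e)\<^sup>2) / V)"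
      unfolding lam2 using p V Lpos by (simp add: field_simps)
    moreover have "a0\<^sup>2 * g * ((\<Sum>e\<in>P. (w e)\<^sup>2) / V) \<le> 1 * g * 1"
      using a0 g V by (intro mult_mono) (auto simp: power_le_one sum_nonneg)
    ultimately show ?thesis
      by simp
  qed
  finally show ?thesis .
qed

lemma comparison_noise_abs_tail_exp:
  fixes a0 g V :: real and L :: nat
  assumes fin: "finite P" and L: "L \<ge> 1" and p: "0 < p" "p \<le> 1"
    and q: "\<forall>e\<in>P. 0 \<le> q e \<and> q e \<le> 1" and a0: "0 < a0" "a0 \<le> 1" and g: "0 < g"
    and V: "0 < V" "(\<Sum>e\<in>P. (w e)\<^sup>2) \<le> V" and w: "\<forall>e\<in>P. a0\<^sup>2 * g * (w e)\<^sup>2 \<le> p * V"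
  shows "measure_pmf.prob (comparison_pmf P p L q)
      {(E, Y). 13 / a0 * sqrt (p * V * g / L) \<le> \<bar>comparison_noise P q L w E Y\<bar>}
    \<le> 2 * exp (- 12 * g)"
proof -
  let ?M = "comparison_pmf P p L q" and ?t = "13 / a0 * sqrt (p * V * g / L)"
  have "{(E, Y). ?t \<le> \<bar>comparison_noise P q L w E Y\<bar>}
      = {(E, Y). ?t \<le> comparison_noise P q L w E Y}
        \<union> {(E, Y). ?t \<le> comparison_noise P q L (\<lambda>e. - w e) E Y}"
    by (auto simp: comparison_noise_uminus abs_if)
  then have "measure_pmf.prob ?M {(E, Y). ?t \<le> \<bar>comparison_noise P q L w E Y\<bar>}
      \<le> measure_pmf.prob ?M {(E, Y). ?t \<le> comparison_noise P q L w E Y}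
       + measure_pmf.prob ?M {(E, Y). ?t \<le> comparison_noise P q L (\<lambda>e. - w e) E Y}"
    by (simp add: measure_Un_le)
  also have "\<dots> \<le> exp (- 12 * g) + exp (- 12 * g)"
    using comparison_noise_tail_exp[OF fin L p q a0 g V w]
      comparison_noise_tail_exp[OF fin L p q a0 g, where w = "\<lambda>e. - w e"] V w
    by (intro add_mono) auto
  finally show ?thesis
    by simp
qed

lemma prob_Ball_ge_union_bound:
  fixes M :: "'a pmf" and I :: "'i set"
  assumes "finite I" and "\<And>i. i \<in> I \<Longrightarrow> measure_pmf.prob M {z. \<not> Q i z} \<le> \<epsilon>"
  shows "1 - real (card I) * \<epsilon> \<le> measure_pmf.prob M {z. \<forall>i\<in>I. Q i z}"
proof -
  have "measure_pmf.prob M (\<Union>i\<in>I. {z. \<not> Q i z}) \<le> (\<Sum>i\<in>I. measure_pmf.prob M {z. \<not> Q i z})"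
    using assms(1) by (intro measure_pmf.finite_measure_subadditive_finite) auto
  also have "\<dots> \<le> real (card I) * \<epsilon>"
    using sum_mono[of I _ "\<lambda>_. \<epsilon>"] assms(2) by simp
  moreover have "{z. \<forall>i\<in>I. Q i z} = UNIV - (\<Union>i\<in>I. {z. \<not> Q i z})"
    by auto
  ultimately show ?thesis
    using measure_pmf.prob_compl[of "\<Union>i\<in>I. {z. \<not> Q i z}" M] by simp
qed

lemma comparison_noise_abs_tail_pow:
  fixes n L :: nat and a0 p :: real and w :: "nat \<times> nat \<Rightarrow> real"
  assumes fin: "finite P" and L: "L \<ge> 1" and p: "0 < p" "p \<le> 1"
    and q: "\<forall>e\<in>P. 0 \<le> q e \<and> q e \<le> 1" and a0: "0 < a0" "a0 \<le> 1"
    and n: "2 \<le> n" "4 * a0\<^sup>2 * ln n \<le> p * n" and w: "\<forall>e\<in>P. (w e)\<^sup>2 \<le> 4"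
  shows "measure_pmf.prob (comparison_pmf P p L q) {(E, Y).
      13 / a0 * sqrt (p * ((\<Sum>e\<in>P. (w e)\<^sup>2) + n) * ln n / L) \<le> \<bar>comparison_noise P q L w E Y\<bar>}
    \<le> 2 / real n ^ 12"
proof -
  \<comment> \<open>The padding by \<open>n\<close> keeps \<open>\<lambda> \<bar>w\<^sub>e\<bar> \<le> sqrt L\<close> for weights up to 2, at no cost in order.\<close>
  define V where "V = (\<Sum>e\<in>P. (w e)\<^sup>2) + n"
  have g: "0 < ln (real n)"
    using n by simp
  have "0 \<le> (\<Sum>e\<in>P. (w e)\<^sup>2)"
    by (simp add: sum_nonneg)
  then have V: "0 < V" "(\<Sum>e\<in>P. (w e)\<^sup>2) \<le> V"
    unfolding V_def using n by auto
  have "a0\<^sup>2 * ln n * (w e)\<^sup>2 \<le> p * V" if e: "e \<in> P" for e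
  proof -
    have "a0\<^sup>2 * ln n * (w e)\<^sup>2 \<le> a0\<^sup>2 * ln n * 4"
      using w e g by (intro mult_left_mono) auto
    also have "\<dots> \<le> p * n"
      using n by simp
    also have "\<dots> \<le> p * V"
      using p V \<open>0 \<le> (\<Sum>e\<in>P. (w e)\<^sup>2)\<close> by (intro mult_left_mono) (auto simp: V_def)
    finally show ?thesis .
  qed
  then have "measure_pmf.prob (comparison_pmf P p L q) {(E, Y).
      13 / a0 * sqrt (p * V * ln n / L) \<le> \<bar>comparison_noise P q L w E Y\<bar>} \<le> 2 * exp (- 12 * ln n)"
    using comparison_noise_abs_tail_exp[OF fin L p q a0 g V] by blast
  moreover have "exp (12 * ln (real n)) = real n ^ 12"
    using exp_of_nat_mult[of 12 "ln (real n)"] n by simp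
  ultimately show ?thesis
    unfolding V_def by (simp add: exp_minus inverse_eq_divide)
qed

lemma comparison_noise_concentration:
  fixes n L :: nat and a0 p :: real and w :: "'i \<Rightarrow> nat \<times> nat \<Rightarrow> real"
  assumes fin: "finite P" and L: "L \<ge> 1" and p: "0 < p" "p \<le> 1"
    and q: "\<forall>e\<in>P. 0 \<le> q e \<and> q e \<le> 1" and a0: "0 < a0" "a0 \<le> 1"
    and n: "2 \<le> n" "4 * a0\<^sup>2 * ln n \<le> p * n"
    and I: "finite I" "card I \<le> 2 * n" and w: "\<forall>i\<in>I. \<forall>e\<in>P. (w i e)\<^sup>2 \<le> 4"
  shows "1 - 4 / real n ^ 10 \<le> measure_pmf.prob (comparison_pmf P p L q)
      {(E, Y). \<forall>i\<in>I. \<bar>comparison_noise P q L (w i) E Y\<bar>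
                        < 13 / a0 * sqrt (p * ((\<Sum>e\<in>P. (w i e)\<^sup>2) + n) * ln n / L)}"
proof -
  define t where "t i = 13 / a0 * sqrt (p * ((\<Sum>e\<in>P. (w i e)\<^sup>2) + n) * ln n / L)" for i
  have "{z. \<not> (\<lambda>(E, Y). \<bar>comparison_noise P q L (w i) E Y\<bar> < t i) z}
      = {(E, Y). t i \<le> \<bar>comparison_noise P q L (w i) E Y\<bar>}" for i
    by auto
  then have tail: "measure_pmf.prob (comparison_pmf P p L q)
      {z. \<not> (\<lambda>(E, Y). \<bar>comparison_noise P q L (w i) E Y\<bar> < t i) z} \<le> 2 / real n ^ 12"
    if "i \<in> I" for i
    unfolding t_def using comparison_noise_abs_tail_pow[OF fin L p q a0 n] w that by simp
  have "real (card I) * (2 / real n ^ 12) \<le> 2 * real n * (2 / real n ^ 12)"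
    using I by (intro mult_right_mono) auto
  also have "\<dots> = 4 / real n ^ 11"
    using n by (simp add: field_simps eval_nat_numeral)
  also have "\<dots> \<le> 4 / real n ^ 10"
    using n by (intro divide_left_mono power_increasing) auto
  finally have "1 - 4 / real n ^ 10 \<le> 1 - real (card I) * (2 / real n ^ 12)"
    by simp
  also have "\<dots> \<le> measure_pmf.prob (comparison_pmf P p L q)
      {z. \<forall>i\<in>I. (\<lambda>(E, Y). \<bar>comparison_noise P q L (w i) E Y\<bar> < t i) z}"
    by (rule prob_Ball_ge_union_bound[OF I(1) tail])
  finally show ?thesis
    unfolding t_def by (simp add: case_prod_unfold)
qed

section \<open>The gradient of the regularised loss\<close>

definition win_prob :: "nat \<Rightarrow> nat \<Rightarrow> (nat \<Rightarrow> nat \<Rightarrow> real) \<Rightarrow> (nat \<Rightarrow> real) \<Rightarrow> nat \<times> nat \<Rightarrow> real" where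
  "win_prob n d x \<theta> e = logistic (score n d x \<theta> (fst e) - score n d x \<theta> (snd e))"

lemma logistic_bounds: "0 \<le> logistic t" "logistic t \<le> 1"
  unfolding logistic_def by (simp_all add: add_pos_pos less_imp_le)

lemma win_prob_bounds: "\<forall>e\<in>P. 0 \<le> win_prob n d x \<theta> e \<and> win_prob n d x \<theta> e \<le> 1"
  unfolding win_prob_def by (simp add: logistic_bounds)

lemma sample_pmf_eq_comparison_pmf:
  "sample_pmf n d x \<theta> p L = comparison_pmf (pairs n) p L (win_prob n d x \<theta>)"
  unfolding sample_pmf_def comparison_pmf_def trials_def win_prob_def by simp

lemma finite_pairs: "finite (pairs n)"
  by (rule finite_subset[of _ "{..<n} \<times> {..<n}"]) (auto simp: pairs_def)

definition score_grad :: "nat \<Rightarrow> nat \<Rightarrow> (nat \<Rightarrow> nat \<Rightarrow> real) \<Rightarrow> nat \<Rightarrow> nat \<Rightarrow> real" where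
  "score_grad n d x i a = of_bool (i = a) + (\<Sum>k<d. x i k * of_bool (n + k = a))"

definition score_diff_grad :: "nat \<Rightarrow> nat \<Rightarrow> (nat \<Rightarrow> nat \<Rightarrow> real) \<Rightarrow> nat \<Rightarrow> nat \<times> nat \<Rightarrow> real" where
  "score_diff_grad n d x a e = score_grad n d x (fst e) a - score_grad n d x (snd e) a"

lemma has_real_derivative_fun_upd:
  "((\<lambda>t. (\<theta>(a := t)) b) has_real_derivative of_bool (b = a)) (at t0)"
  by (cases "b = a") (auto intro: derivative_eq_intros)

lemma has_real_derivative_score:
  "((\<lambda>t. score n d x (\<theta>(a := t)) i) has_real_derivative score_grad n d x i a) (at t0)"
  unfolding score_def score_grad_def
  by (intro DERIV_add has_real_derivative_fun_upd DERIV_sum DERIV_cmult)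

lemma has_real_derivative_logistic_loss:
  assumes u: "(u has_real_derivative u') (at t0)"
  shows "((\<lambda>t. - y * u t + ln (1 + exp (u t))) has_real_derivative
    (logistic (u t0) - y) * u') (at t0)"
proof -
  have "((\<lambda>t. 1 + exp (u t)) has_real_derivative exp (u t0) * u') (at t0)"
    using DERIV_add[OF DERIV_const[of 1] DERIV_chain2[OF DERIV_exp u]] by simp
  moreover have "(ln has_real_derivative inverse (1 + exp (u t0))) (at (1 + exp (u t0)))"
    by (rule DERIV_ln) (simp add: add_pos_pos)
  ultimately have "((\<lambda>t. ln (1 + exp (u t))) has_real_derivative
      inverse (1 + exp (u t0)) * (exp (u t0) * u')) (at t0)"
    by (rule DERIV_chain2[rotated])
  then have "((\<lambda>t. - y * u t + ln (1 + exp (u t))) has_real_derivative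
      - y * u' + inverse (1 + exp (u t0)) * (exp (u t0) * u')) (at t0)"
    by (intro DERIV_add DERIV_cmult u)
  moreover have "- y * u' + inverse (1 + exp (u t0)) * (exp (u t0) * u')
      = (logistic (u t0) - y) * u'"
    by (simp add: logistic_def divide_inverse algebra_simps)
  ultimately show ?thesis
    by simp
qed

lemma grad_comp_reg_loss:
  assumes "a < n + d"
  shows "grad_comp (reg_loss n d x L \<tau> E Y) \<theta> a =
    comparison_noise (pairs n) (win_prob n d x \<theta>) L (score_diff_grad n d x a) E Y + \<tau> * \<theta> a"
proof -
  let ?w = "score_diff_grad n d x a" and ?s = "\<lambda>t. score n d x (\<theta>(a := t))"
  have loss: "((\<lambda>t. BTL_loss n d x L E Y (\<theta>(a := t))) has_real_derivative
      comparison_noise (pairs n) (win_prob n d x (\<theta>(a := t0))) L ?w E Y) (at t0)" for t0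
    unfolding BTL_loss_def comparison_noise_def
  proof (intro DERIV_sum)
    fix e :: "nat \<times> nat"
    obtain i j where e: "e = (i, j)"
      by fastforce
    have "((\<lambda>t. ?s t i - ?s t j) has_real_derivative ?w (i, j)) (at t0)"
      unfolding score_diff_grad_def by (auto intro!: DERIV_diff has_real_derivative_score)
    from has_real_derivative_logistic_loss[OF this, of "ybar L Y i j"]
    show "((\<lambda>t. case e of (i, j) \<Rightarrow> if E (i, j) then - ybar L Y i j * (?s t i - ?s t j)
            + ln (1 + exp (?s t i - ?s t j)) else 0) has_real_derivative
        (case e of (i, j) \<Rightarrow> if E (i, j)
            then (win_prob n d x (\<theta>(a := t0)) (i, j) - ybar L Y i j) * ?w (i, j) else 0)) (at t0)"
      by (cases "E (i, j)") (simp_all add: e win_prob_def)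
  qed
  have "((\<lambda>t. ((\<theta>(a := t)) b)\<^sup>2) has_real_derivative 2 * (\<theta>(a := t0)) b * of_bool (b = a)) (at t0)"
    for b t0
    using DERIV_pow[of 2 t0] by (cases "b = a") simp_all
  then have reg: "((\<lambda>t. \<tau> / 2 * (\<Sum>b<n+d. ((\<theta>(a := t)) b)\<^sup>2)) has_real_derivative
      \<tau> / 2 * (\<Sum>b<n+d. 2 * (\<theta>(a := t0)) b * of_bool (b = a))) (at t0)" for t0
    by (intro DERIV_cmult DERIV_sum)
  have "(\<Sum>b<n+d. 2 * \<theta> b * of_bool (b = a)) = (\<Sum>b<n+d. if b = a then 2 * \<theta> a else 0)"
    by (intro sum.cong) auto
  also have "\<dots> = 2 * \<theta> a"
    using assms by simp
  finally have reg_grad: "\<tau> / 2 * (\<Sum>b<n+d. 2 * \<theta> b * of_bool (b = a)) = \<tau> * \<theta> a"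
    by simp
  have "((\<lambda>t. reg_loss n d x L \<tau> E Y (\<theta>(a := t))) has_real_derivative
      comparison_noise (pairs n) (win_prob n d x (\<theta>(a := \<theta> a))) L ?w E Y
      + \<tau> / 2 * (\<Sum>b<n+d. 2 * (\<theta>(a := \<theta> a)) b * of_bool (b = a))) (at (\<theta> a))"
    unfolding reg_loss_def by (rule DERIV_add[OF loss reg])
  then show ?thesis
    unfolding grad_comp_def fun_upd_triv reg_grad by (rule DERIV_imp_deriv)
qed

section \<open>Size of the gradient weights and of the regularisation term\<close>

lemma score_diff_grad_alpha:
  "a < n \<Longrightarrow> score_diff_grad n d x a (i, j) = of_bool (i = a) - of_bool (j = a)"
  by (simp add: score_diff_grad_def score_grad_def)

lemma score_diff_grad_beta:
  assumes "k < d" "i < n" "j < n"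
  shows "score_diff_grad n d x (n + k) (i, j) = x i k - x j k"
proof -
  have "score_grad n d x i' (n + k) = x i' k" if "i' < n" for i'
  proof -
    have "(\<Sum>k'<d. x i' k' * of_bool (n + k' = n + k)) = (\<Sum>k'<d. if k' = k then x i' k else 0)"
      by (intro sum.cong) auto
    then show ?thesis
      using that assms(1) by (simp add: score_grad_def)
  qed
  then show ?thesis
    using assms by (simp add: score_diff_grad_def)
qed

lemma sq_diff_le: "((u::real) - v)\<^sup>2 \<le> 2 * u\<^sup>2 + 2 * v\<^sup>2"
proof -
  have "2 * u\<^sup>2 + 2 * v\<^sup>2 - (u - v)\<^sup>2 = (u + v)\<^sup>2"
    by (simp add: power2_eq_square algebra_simps)
  then show ?thesis
    using zero_le_power2[of "u + v"] by linarith
qed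

lemma sum_sq_covariate_diff_le:
  assumes rows: "\<forall>i<n. (\<Sum>k<d. (x i k)\<^sup>2) \<le> (real d + 1) / real n" and "i < n" "j < n"
  shows "(\<Sum>k<d. (x i k - x j k)\<^sup>2) \<le> 4 * (real d + 1) / real n"
proof -
  have "(\<Sum>k<d. (x i k - x j k)\<^sup>2) \<le> (\<Sum>k<d. 2 * (x i k)\<^sup>2 + 2 * (x j k)\<^sup>2)"
    by (intro sum_mono sq_diff_le)
  also have "\<dots> = 2 * (\<Sum>k<d. (x i k)\<^sup>2) + 2 * (\<Sum>k<d. (x j k)\<^sup>2)"
    by (simp add: sum.distrib sum_distrib_left)
  also have "\<dots> \<le> 4 * ((real d + 1) / real n)"
    using rows[rule_format, OF assms(2)] rows[rule_format, OF assms(3)] by linarith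
  finally show ?thesis
    by simp
qed

lemma score_diff_grad_sq_le:
  assumes rows: "\<forall>i<n. (\<Sum>k<d. (x i k)\<^sup>2) \<le> (real d + 1) / real n"
    and "d < n" "a < n + d" "e \<in> pairs n"
  shows "(score_diff_grad n d x a e)\<^sup>2 \<le> 4"
proof -
  obtain i j where e: "e = (i, j)" "i < n" "j < n"
    using assms(4) unfolding pairs_def by auto
  show ?thesis
  proof (cases "a < n")
    case True
    then show ?thesis
      by (simp add: e score_diff_grad_alpha)
  next
    case False
    then obtain k where k: "a = n + k" "k < d"
      using assms(3) by (metis add_less_cancel_left le_Suc_ex not_less)
    have "(x i k - x j k)\<^sup>2 \<le> (\<Sum>k<d. (x i k - x j k)\<^sup>2)"
      using k by (intro member_le_sum) auto
    also have "\<dots> \<le> 4 * (real d + 1) / real n"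
      by (rule sum_sq_covariate_diff_le[OF rows e(2,3)])
    also have "\<dots> \<le> 4"
      using assms(2) by (simp add: field_simps)
    finally show ?thesis
      using k e by (simp add: score_diff_grad_beta)
  qed
qed

lemma sum_sq_score_diff_grad_alpha_le:
  assumes "a < n"
  shows "(\<Sum>e\<in>pairs n. (score_diff_grad n d x a e)\<^sup>2) \<le> 2 * real n"
proof -
  have "(\<Sum>e\<in>pairs n. (score_diff_grad n d x a e)\<^sup>2)
      \<le> (\<Sum>(i, j)\<in>{..<n} \<times> {..<n}. of_bool (i = a) + of_bool (j = a))"
  proof (rule order_trans[OF sum_mono sum_mono2])
    show "(score_diff_grad n d x a e)\<^sup>2 \<le> (\<lambda>(i, j). of_bool (i = a) + of_bool (j = a)) e" for e
      using assms by (cases e) (simp add: score_diff_grad_alpha)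
  qed (auto simp: pairs_def)
  also have "\<dots> = 2 * real n"
    using assms
    by (simp add: sum.cartesian_product[symmetric] sum.distrib of_bool_def flip: sum_distrib_left)
  finally show ?thesis .
qed

lemma sum_sq_score_diff_grad_beta_le:
  assumes rows: "\<forall>i<n. (\<Sum>k<d. (x i k)\<^sup>2) \<le> (real d + 1) / real n"
  shows "(\<Sum>k<d. \<Sum>e\<in>pairs n. (score_diff_grad n d x (n + k) e)\<^sup>2) \<le> 4 * real n * (real d + 1)"
proof -
  have "(\<Sum>k<d. \<Sum>e\<in>pairs n. (score_diff_grad n d x (n + k) e)\<^sup>2)
      = (\<Sum>(i, j)\<in>pairs n. \<Sum>k<d. (x i k - x j k)\<^sup>2)"
    by (subst sum.swap) (auto intro!: sum.cong simp: pairs_def score_diff_grad_beta)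
  also have "\<dots> \<le> (\<Sum>e\<in>pairs n. 4 * (real d + 1) / real n)"
    using sum_sq_covariate_diff_le[OF rows] by (intro sum_mono) (auto simp: pairs_def)
  also have "\<dots> = real (card (pairs n)) * (4 * (real d + 1) / real n)"
    by simp
  also have "\<dots> \<le> (real n * real n) * (4 * (real d + 1) / real n)"
  proof (intro mult_right_mono)
    have "card (pairs n) \<le> card ({..<n} \<times> {..<n})"
      by (intro card_mono) (auto simp: pairs_def)
    then show "real (card (pairs n)) \<le> real n * real n"
      by (simp flip: of_nat_mult)
  qed simp
  also have "\<dots> \<le> 4 * real n * (real d + 1)"
    by (cases "n = 0") simp_all
  finally show ?thesis .
qed

lemma kappa2_nonneg:
  assumes "0 < n"
  shows "0 \<le> kappa2 n \<theta>"
proof -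
  have "finite {\<bar>\<theta> i\<bar> | i. i < n}"
    by (simp add: setcompr_eq_image)
  moreover have "\<bar>\<theta> 0\<bar> \<in> {\<bar>\<theta> i\<bar> | i. i < n}"
    using assms by auto
  ultimately have "\<bar>\<theta> 0\<bar> \<le> kappa2 n \<theta>"
    unfolding kappa2_def by (rule Max_ge)
  then show ?thesis
    by linarith
qed

lemma tau_val_norm_le:
  assumes n: "0 < n" and c: "0 \<le> c"
  shows "\<bar>tau_val c n d x \<theta> L\<bar> * sqrt (\<Sum>a<n+d. (\<theta> a)\<^sup>2) \<le> c * sqrt (ln n / L)"
proof (cases "sqrt (\<Sum>a<n+d. (\<theta> a)\<^sup>2) = 0")
  case True
  then show ?thesis
    using c n by simp
next
  case False
  \<comment> \<open>Only the entry \<open>1 / (\<kappa>\<^sub>3 sqrt (d + 1))\<close> of the minimum defining \<open>\<tau>\<close> is needed.\<close>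
  define T where "T = sqrt (\<Sum>a<n+d. (\<theta> a)\<^sup>2)"
  define r where "r = 1 / (kappa3 n d \<theta> * sqrt (real d + 1))"
  have T: "0 < T"
    using False unfolding T_def by (simp add: sum_nonneg order.not_eq_order_implies_strict)
  have k3: "kappa3 n d \<theta> = T / sqrt n"
    unfolding kappa3_def T_def ..
  then have "0 < kappa3 n d \<theta>"
    using T n by simp
  then have "tau_val c n d x \<theta> L
      = c * (if kappa2 n \<theta> = 0 then r else min (kappa1 n d x \<theta> / kappa2 n \<theta>) r)
      * sqrt (ln n / (n * L))"
    unfolding tau_val_def Let_def r_def by simp
  moreover have "0 \<le> (if kappa2 n \<theta> = 0 then r else min (kappa1 n d x \<theta> / kappa2 n \<theta>) r)"
    using \<open>0 < kappa3 n d \<theta>\<close> kappa2_nonneg[OF n, of \<theta>] by (simp add: r_def kappa1_def)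
  moreover have "(if kappa2 n \<theta> = 0 then r else min (kappa1 n d x \<theta> / kappa2 n \<theta>) r) \<le> r"
    by simp
  ultimately have "\<bar>tau_val c n d x \<theta> L\<bar> * T \<le> c * r * sqrt (ln n / (n * L)) * T"
    using c T n by (simp add: abs_mult mult_right_mono mult_left_mono)
  also have "\<dots> = c * (sqrt (ln n / (n * L)) * sqrt n) / sqrt (real d + 1)"
    unfolding r_def k3 using T n by (simp add: field_simps)
  also have "sqrt (ln n / (n * L)) * sqrt n = sqrt (ln n / L)"
    using n by (simp add: real_sqrt_mult[symmetric] field_simps)
  also have "c * sqrt (ln n / L) / sqrt (real d + 1) \<le> c * sqrt (ln n / L)"
  proof -
    have "1 \<le> sqrt (real d + 1)"
      by simp
    moreover have "0 \<le> c * sqrt (ln n / L)"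
      using c n by simp
    ultimately show ?thesis
      by (simp add: divide_le_eq mult_le_cancel_left1 mult_left_le)
  qed
  finally show ?thesis
    unfolding T_def .
qed

lemma abs_grad_comp_reg_loss_le:
  assumes "a < n + d"
  shows "\<bar>grad_comp (reg_loss n d x L \<tau> E Y) \<theta> a\<bar>
    \<le> \<bar>comparison_noise (pairs n) (win_prob n d x \<theta>) L (score_diff_grad n d x a) E Y\<bar>
       + \<bar>\<tau>\<bar> * sqrt (\<Sum>b<n+d. (\<theta> b)\<^sup>2)"
proof -
  have "\<bar>\<theta> a\<bar>\<^sup>2 \<le> (\<Sum>b<n+d. (\<theta> b)\<^sup>2)"
    using assms by (simp, intro member_le_sum) auto
  then have "\<bar>\<tau> * \<theta> a\<bar> \<le> \<bar>\<tau>\<bar> * sqrt (\<Sum>b<n+d. (\<theta> b)\<^sup>2)"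
    unfolding abs_mult by (intro mult_left_mono real_le_rsqrt) auto
  moreover have "\<bar>comparison_noise (pairs n) (win_prob n d x \<theta>) L (score_diff_grad n d x a) E Y
      + \<tau> * \<theta> a\<bar>
      \<le> \<bar>comparison_noise (pairs n) (win_prob n d x \<theta>) L (score_diff_grad n d x a) E Y\<bar> + \<bar>\<tau> * \<theta> a\<bar>"
    by (rule abs_triangle_ineq)
  ultimately show ?thesis
    unfolding grad_comp_reg_loss[OF assms] by linarith
qed

lemma L2_grad_comp_reg_loss_beta_le:
  "sqrt (\<Sum>k<d. (grad_comp (reg_loss n d x L \<tau> E Y) \<theta> (n + k))\<^sup>2)
    \<le> sqrt (\<Sum>k<d. (comparison_noise (pairs n) (win_prob n d x \<theta>) L
                            (score_diff_grad n d x (n + k)) E Y)\<^sup>2)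
       + \<bar>\<tau>\<bar> * sqrt (\<Sum>b<n+d. (\<theta> b)\<^sup>2)"
proof -
  let ?S = "\<lambda>k. comparison_noise (pairs n) (win_prob n d x \<theta>) L (score_diff_grad n d x (n + k)) E Y"
  have "sqrt (\<Sum>k<d. (grad_comp (reg_loss n d x L \<tau> E Y) \<theta> (n + k))\<^sup>2)
      = L2_set (\<lambda>k. ?S k + \<tau> * \<theta> (n + k)) {..<d}"
    unfolding L2_set_def by (simp add: grad_comp_reg_loss)
  also have "\<dots> \<le> L2_set ?S {..<d} + L2_set (\<lambda>k. \<tau> * \<theta> (n + k)) {..<d}"
    by (rule L2_set_triangle_ineq)
  also have "L2_set (\<lambda>k. \<tau> * \<theta> (n + k)) {..<d} = \<bar>\<tau>\<bar> * sqrt (\<Sum>b\<in>(+) n ` {..<d}. (\<theta> b)\<^sup>2)"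
    by (simp add: L2_set_def power_mult_distrib sum.reindex real_sqrt_mult flip: sum_distrib_left)
  also have "\<dots> \<le> \<bar>\<tau>\<bar> * sqrt (\<Sum>b<n+d. (\<theta> b)\<^sup>2)"
    by (intro mult_left_mono real_sqrt_le_mono sum_mono2) auto
  finally show ?thesis
    unfolding L2_set_def by simp
qed

lemma noise_threshold_alpha_le:
  fixes C0 p :: real and L :: nat
  assumes "a < n" "0 \<le> C0" "0 \<le> p"
  shows "C0 * sqrt (p * ((\<Sum>e\<in>pairs n. (score_diff_grad n d x a e)\<^sup>2) + n) * ln n / L)
    \<le> 2 * C0 * sqrt (real n * p * ln n / L)"
proof -
  have "(\<Sum>e\<in>pairs n. (score_diff_grad n d x a e)\<^sup>2) + n \<le> 4 * n"
    using sum_sq_score_diff_grad_alpha_le[OF assms(1), of d x] by simp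
  then have "p * ((\<Sum>e\<in>pairs n. (score_diff_grad n d x a e)\<^sup>2) + n) * ln n / L
      \<le> p * (4 * n) * ln n / L"
    using assms by (intro divide_right_mono mult_right_mono mult_left_mono) auto
  also have "\<dots> = 2\<^sup>2 * (real n * p * ln n / L)"
    by simp
  finally have "sqrt (p * ((\<Sum>e\<in>pairs n. (score_diff_grad n d x a e)\<^sup>2) + n) * ln n / L)
      \<le> sqrt (2\<^sup>2 * (real n * p * ln n / L))"
    by (rule real_sqrt_le_mono)
  also have "\<dots> = 2 * sqrt (real n * p * ln n / L)"
    unfolding real_sqrt_mult by simp
  finally have "sqrt (p * ((\<Sum>e\<in>pairs n. (score_diff_grad n d x a e)\<^sup>2) + n) * ln n / L)
      \<le> 2 * sqrt (real n * p * ln n / L)" .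
  from mult_left_mono[OF this assms(2)] show ?thesis
    by (simp add: mult_ac)
qed

lemma noise_threshold_beta_le:
  fixes C0 p :: real and L :: nat
  assumes rows: "\<forall>i<n. (\<Sum>k<d. (x i k)\<^sup>2) \<le> (real d + 1) / real n" and "0 \<le> C0" "0 \<le> p"
  shows "sqrt (\<Sum>k<d.
      (C0 * sqrt (p * ((\<Sum>e\<in>pairs n. (score_diff_grad n d x (n + k) e)\<^sup>2) + n) * ln n / L))\<^sup>2)
    \<le> 3 * C0 * sqrt ((real d + 1) * real n * p * ln n / L)"
proof -
  define V where "V k = (\<Sum>e\<in>pairs n. (score_diff_grad n d x (n + k) e)\<^sup>2) + n" for k
  have V: "0 \<le> V k" for k
    unfolding V_def by (simp add: sum_nonneg)
  have "(\<Sum>k<d. V k) \<le> 4 * real n * (real d + 1) + real d * real n"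
    unfolding V_def sum.distrib using sum_sq_score_diff_grad_beta_le[OF rows] by simp
  also have "\<dots> \<le> 3\<^sup>2 * (real n * (real d + 1))"
    by (simp add: algebra_simps)
  finally have sum_V: "(\<Sum>k<d. V k) \<le> 3\<^sup>2 * (real n * (real d + 1))" .
  have "0 \<le> ln (real n)"
    by (cases "n = 0") simp_all
  then have "0 \<le> p * ln n / L"
    using assms(3) by simp
  have "(C0 * sqrt (p * V k * ln n / L))\<^sup>2 = C0\<^sup>2 * (p * ln n / L) * V k" for k
  proof -
    have "0 \<le> p * V k * ln n / L"
      using mult_nonneg_nonneg[OF V[of k] \<open>0 \<le> p * ln n / L\<close>] by (simp add: mult_ac)
    then have "(C0 * sqrt (p * V k * ln n / L))\<^sup>2 = C0\<^sup>2 * (p * V k * ln n / L)"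
      by (simp only: power_mult_distrib real_sqrt_pow2)
    then show ?thesis
      by simp
  qed
  then have "(\<Sum>k<d. (C0 * sqrt (p * V k * ln n / L))\<^sup>2) = C0\<^sup>2 * (p * ln n / L) * (\<Sum>k<d. V k)"
    by (simp add: sum_distrib_left)
  also have "\<dots> \<le> C0\<^sup>2 * (p * ln n / L) * (3\<^sup>2 * (real n * (real d + 1)))"
    using sum_V \<open>0 \<le> p * ln n / L\<close> by (intro mult_left_mono mult_nonneg_nonneg) auto
  also have "\<dots> = (3 * C0)\<^sup>2 * ((real d + 1) * real n * p * ln n / L)"
    by (simp add: power_mult_distrib)
  finally have "sqrt (\<Sum>k<d. (C0 * sqrt (p * V k * ln n / L))\<^sup>2)
      \<le> sqrt ((3 * C0)\<^sup>2 * ((real d + 1) * real n * p * ln n / L))"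
    by (rule real_sqrt_le_mono)
  also have "\<dots> = 3 * C0 * sqrt ((real d + 1) * real n * p * ln n / L)"
    unfolding real_sqrt_mult real_sqrt_abs using assms(2) by simp
  finally show ?thesis
    unfolding V_def .
qed

lemma tau_val_norm_le_rates:
  fixes p c :: real
  assumes "0 < n" "0 \<le> c" "1 \<le> p * n"
  shows "\<bar>tau_val c n d x \<theta> L\<bar> * sqrt (\<Sum>a<n+d. (\<theta> a)\<^sup>2) \<le> c * sqrt (real n * p * ln n / L)"
    and "\<bar>tau_val c n d x \<theta> L\<bar> * sqrt (\<Sum>a<n+d. (\<theta> a)\<^sup>2)
      \<le> c * sqrt ((real d + 1) * real n * p * ln n / L)"
proof -
  have g: "0 \<le> ln (real n)"
    using assms(1) by simp
  have "1 * 1 \<le> (real d + 1) * (real n * p)"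
    using assms(3) by (intro mult_mono) (auto simp: mult.commute)
  then have "1 * ln n \<le> ((real d + 1) * real n * p) * ln n"
    using g by (intro mult_right_mono) (simp_all add: mult.assoc)
  moreover have "1 * ln n \<le> (real n * p) * ln n"
    using mult_right_mono[OF assms(3) g] by (simp add: mult.commute)
  ultimately have "sqrt (ln n / L) \<le> sqrt (real n * p * ln n / L)"
    "sqrt (ln n / L) \<le> sqrt ((real d + 1) * real n * p * ln n / L)"
    by (simp_all add: real_sqrt_le_mono divide_right_mono)
  then show "\<bar>tau_val c n d x \<theta> L\<bar> * sqrt (\<Sum>a<n+d. (\<theta> a)\<^sup>2) \<le> c * sqrt (real n * p * ln n / L)"
    "\<bar>tau_val c n d x \<theta> L\<bar> * sqrt (\<Sum>a<n+d. (\<theta> a)\<^sup>2)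
      \<le> c * sqrt ((real d + 1) * real n * p * ln n / L)"
    using tau_val_norm_le[OF assms(1,2), of d x \<theta> L] mult_left_mono[OF _ assms(2)]
    by (auto intro: order_trans)
qed

section \<open>High-probability bound on the gradient\<close>

lemma reg_loss_grad_le_of_noise_le:
  fixes p c C0 :: real
  assumes n: "0 < n" and p: "1 \<le> p * n" and C0: "0 \<le> C0" and c: "0 \<le> c"
    and rows: "\<forall>i<n. (\<Sum>k<d. (x i k)\<^sup>2) \<le> (real d + 1) / real n"
    and small: "\<forall>a<n+d.
      \<bar>comparison_noise (pairs n) (win_prob n d x \<theta>) L (score_diff_grad n d x a) E Y\<bar>
        \<le> C0 * sqrt (p * ((\<Sum>e\<in>pairs n. (score_diff_grad n d x a e)\<^sup>2) + n) * ln n / L)"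
  defines "g \<equiv> grad_comp (reg_loss n d x L (tau_val c n d x \<theta> L) E Y) \<theta>"
  shows "\<forall>i<n. \<bar>g i\<bar> \<le> (3 * C0 + c) * sqrt (real n * p * ln (real n) / real L)"
    and "sqrt (\<Sum>k<d. (g (n + k))\<^sup>2)
      \<le> (3 * C0 + c) * sqrt ((real d + 1) * real n * p * ln (real n) / real L)"
proof -
  define noise
    where "noise a = comparison_noise (pairs n) (win_prob n d x \<theta>) L (score_diff_grad n d x a) E Y"
    for a
  define t where "t a = C0 * sqrt (p * ((\<Sum>e\<in>pairs n. (score_diff_grad n d x a e)\<^sup>2) + n) * ln n / L)"
    for a
  define s1 where "s1 = sqrt (real n * p * ln (real n) / real L)"
  define s2 where "s2 = sqrt ((real d + 1) * real n * p * ln (real n) / real L)"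
  define T where "T = \<bar>tau_val c n d x \<theta> L\<bar> * sqrt (\<Sum>a<n+d. (\<theta> a)\<^sup>2)"
  have p0: "0 \<le> p"
    using p n mult_neg_pos[of p "real n"] by (cases "p < 0") auto
  have tau: "T \<le> c * s1" "T \<le> c * s2"
    unfolding T_def s1_def s2_def using tau_val_norm_le_rates[OF n c p] by simp_all
  show "\<forall>i<n. \<bar>g i\<bar> \<le> (3 * C0 + c) * s1"
  proof (intro allI impI)
    fix a assume "a < n"
    then have "\<bar>g a\<bar> \<le> \<bar>noise a\<bar> + T"
      unfolding g_def noise_def T_def mult.assoc[symmetric]
      by (intro abs_grad_comp_reg_loss_le) simp
    also have "\<dots> \<le> t a + c * s1"
      using small \<open>a < n\<close> tau(1) unfolding noise_def t_def by (simp add: add_mono)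
    also have "t a \<le> 2 * C0 * s1"
      unfolding t_def s1_def using noise_threshold_alpha_le[OF \<open>a < n\<close> C0 p0] by simp
    finally show "\<bar>g a\<bar> \<le> (3 * C0 + c) * s1"
      using mult_nonneg_nonneg[OF C0, of s1] n p0 by (simp add: s1_def algebra_simps)
  qed
  have "sqrt (\<Sum>k<d. (g (n + k))\<^sup>2) \<le> sqrt (\<Sum>k<d. (noise (n + k))\<^sup>2) + T"
    unfolding g_def noise_def T_def by (rule L2_grad_comp_reg_loss_beta_le)
  also have "(\<Sum>k<d. (noise (n + k))\<^sup>2) \<le> (\<Sum>k<d. (t (n + k))\<^sup>2)"
  proof (intro sum_mono)
    fix k assume "k \<in> {..<d}"
    then have "\<bar>noise (n + k)\<bar> \<le> t (n + k)"
      using small unfolding noise_def t_def by simp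
    moreover have "0 \<le> t (n + k)"
      unfolding t_def using C0 p0 n
      by (intro mult_nonneg_nonneg real_sqrt_ge_zero divide_nonneg_nonneg) (auto simp: sum_nonneg)
    ultimately show "(noise (n + k))\<^sup>2 \<le> (t (n + k))\<^sup>2"
      by (simp add: power2_le_iff_abs_le)
  qed
  also have "sqrt (\<Sum>k<d. (t (n + k))\<^sup>2) \<le> 3 * C0 * s2"
    unfolding t_def s2_def using noise_threshold_beta_le[OF rows C0 p0] by simp
  finally show "sqrt (\<Sum>k<d. (g (n + k))\<^sup>2) \<le> (3 * C0 + c) * s2"
    using tau(2) by (simp add: algebra_simps)
qed

lemma reg_loss_grad_concentration:
  fixes n d L :: nat and p a0 c :: real
  assumes n: "2 \<le> n" "d < n" and L: "1 \<le> L" and p: "0 < p" "p \<le> 1" "1 \<le> p * n"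
    and a0: "0 < a0" "a0 \<le> 1" "4 * a0\<^sup>2 * ln n \<le> p * n" and c: "0 \<le> c"
    and rows: "\<forall>i<n. (\<Sum>k<d. (x i k)\<^sup>2) \<le> (real d + 1) / real n"
  shows "1 - 4 / real n ^ 10 \<le> measure_pmf.prob (sample_pmf n d x \<theta> p L)
    {(E, Y). let g = grad_comp (reg_loss n d x L (tau_val c n d x \<theta> L) E Y) \<theta> in
       (\<forall>i<n. \<bar>g i\<bar> \<le> (3 * (13 / a0) + c) * sqrt (real n * p * ln (real n) / real L)) \<and>
       sqrt (\<Sum>k<d. (g (n + k))\<^sup>2)
         \<le> (3 * (13 / a0) + c) * sqrt ((real d + 1) * real n * p * ln (real n) / real L)}"
    (is "_ \<le> measure_pmf.prob _ ?good")
proof -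
  let ?M = "comparison_pmf (pairs n) p L (win_prob n d x \<theta>)"
    and ?w = "score_diff_grad n d x"
  let ?small = "{(E, Y). \<forall>a\<in>{..<n+d}.
    \<bar>comparison_noise (pairs n) (win_prob n d x \<theta>) L (?w a) E Y\<bar>
      < 13 / a0 * sqrt (p * ((\<Sum>e\<in>pairs n. (?w a e)\<^sup>2) + n) * ln n / L)}"
  have "1 - 4 / real n ^ 10 \<le> measure_pmf.prob ?M ?small"
  proof (rule comparison_noise_concentration
      [OF finite_pairs L p(1,2) win_prob_bounds a0(1,2) n(1) a0(3)])
    show "\<forall>a\<in>{..<n+d}. \<forall>e\<in>pairs n. (?w a e)\<^sup>2 \<le> 4"
      using score_diff_grad_sq_le[OF rows n(2)] by blast
  qed (use n in simp_all)
  also have "?small \<subseteq> ?good"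
  proof
    fix z assume "z \<in> ?small"
    then obtain E Y where z: "z = (E, Y)"
      and small: "\<forall>a<n+d. \<bar>comparison_noise (pairs n) (win_prob n d x \<theta>) L (?w a) E Y\<bar>
        \<le> 13 / a0 * sqrt (p * ((\<Sum>e\<in>pairs n. (?w a e)\<^sup>2) + n) * ln n / L)"
      by (cases z) (auto simp: less_imp_le)
    have "0 < n" "0 \<le> 13 / a0"
      using n a0 by simp_all
    from reg_loss_grad_le_of_noise_le[OF this(1) p(3) this(2) c rows small]
    show "z \<in> ?good"
      unfolding z by (simp add: Let_def)
  qed
  then have "measure_pmf.prob ?M ?small \<le> measure_pmf.prob ?M ?good"
    by (rule measure_pmf.finite_measure_mono) simp
  finally show ?thesis
    unfolding sample_pmf_eq_comparison_pmf .
qed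

lemma edge_density_bounds:
  fixes c_p p a0 :: real
  assumes "0 < c_p" "exp (1 / c_p) \<le> real n" "c_p * ln (real n) < p * real n"
    and "4 * a0\<^sup>2 \<le> c_p" "0 \<le> p"
  shows "0 < p" "1 \<le> p * real n" "4 * a0\<^sup>2 * ln (real n) \<le> p * real n"
proof -
  have "0 < real n"
    using order_less_le_trans[OF exp_gt_zero assms(2)] .
  then have "1 / c_p \<le> ln (real n)"
    using assms(2) by (simp add: ln_ge_iff)
  then have "1 \<le> c_p * ln (real n)"
    using assms(1) by (simp add: field_simps)
  have "0 \<le> ln (real n)"
    using \<open>0 < real n\<close> by simp
  moreover have "4 * a0\<^sup>2 * ln (real n) \<le> c_p * ln (real n)"
    using assms(4) \<open>0 \<le> ln (real n)\<close> by (rule mult_right_mono)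
  ultimately show "1 \<le> p * real n" "4 * a0\<^sup>2 * ln (real n) \<le> p * real n"
    using \<open>1 \<le> c_p * ln (real n)\<close> assms(3) by linarith+
  then show "0 < p"
    using assms(5) by (cases "p = 0") auto
qed

theorem lemma20:
  fixes c_p c_1 c_tau :: real
  assumes "c_p > 0" and "c_1 > 0" and "c_tau > 0"
  shows "\<exists>C C' :: real. \<exists>N0 :: nat. C > 0 \<and> C' > 0 \<and>
    (\<forall>(n::nat) (d::nat) (p::real) (L::nat) (x :: nat \<Rightarrow> nat \<Rightarrow> real) (\<theta>s :: nat \<Rightarrow> real).
      n \<ge> N0 \<longrightarrow> d < n \<longrightarrow> L \<ge> 1 \<longrightarrow> 0 \<le> p \<longrightarrow> p \<le> 1 \<longrightarrow>
      p * real n > c_p * ln (real n) \<longrightarrow>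
      (\<forall>i<n. sqrt (\<Sum>k<d. (x i k)\<^sup>2) \<le> sqrt ((real d + 1) / real n)) \<longrightarrow>
      (\<forall>v :: nat \<Rightarrow> real.
         sqrt (\<Sum>a<n+d. (\<Sum>(i, j)\<in>pairs n.
                 (\<lambda>b. (if b < n then (if b = i then 1 else 0) - (if b = j then 1 else 0)
                        else x i (b - n) - x j (b - n))) a *
                 (\<Sum>b<n+d. (if b < n then (if b = i then 1 else 0) - (if b = j then 1 else 0)
                        else x i (b - n) - x j (b - n)) * v b))\<^sup>2)
         \<le> c_1 * real n * sqrt (\<Sum>a<n+d. (v a)\<^sup>2)) \<longrightarrow>
      measure_pmf.prob (sample_pmf n d x \<theta>s p L)
        {(E, Y). let g = grad_comp (reg_loss n d x L (tau_val c_tau n d x \<theta>s L) E Y) \<theta>s in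
           (\<forall>i<n. \<bar>g i\<bar> \<le> C * sqrt (real n * p * ln (real n) / real L)) \<and>
           sqrt (\<Sum>k<d. (g (n + k))\<^sup>2) \<le> C * sqrt ((real d + 1) * real n * p * ln (real n) / real L)}
        \<ge> 1 - C' / (real n) ^ 10)"
proof -
  define a0 where "a0 = min 1 (sqrt c_p / 2)"
  define N0 :: nat where "N0 = max 3 (nat \<lceil>exp (1 / c_p)\<rceil>)"
  have a0: "0 < a0" "a0 \<le> 1"
    using assms(1) by (auto simp: a0_def)
  have "a0\<^sup>2 \<le> (sqrt c_p / 2)\<^sup>2"
    using a0 by (intro power_mono) (auto simp: a0_def)
  then have a0_sq: "4 * a0\<^sup>2 \<le> c_p"
    using assms(1) by (simp add: power_divide)
  show ?thesis
  proof (rule exI[of _ "3 * (13 / a0) + c_tau"], rule exI[of _ 4], rule exI[of _ N0],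
      intro conjI allI impI, goal_cases)
    case (3 n d p L x \<theta>s)
    then have n: "N0 \<le> n" "d < n" and L: "1 \<le> L" and p: "0 \<le> p" "p \<le> 1"
      and pn: "c_p * ln (real n) < p * real n"
      and rows: "\<forall>i<n. (\<Sum>k<d. (x i k)\<^sup>2) \<le> (real d + 1) / real n"
      by auto
    have "exp (1 / c_p) \<le> real n"
      using n(1) real_nat_ceiling_ge[of "exp (1 / c_p)"] unfolding N0_def by linarith
    note density = edge_density_bounds[OF assms(1) this pn a0_sq p(1)]
    show ?case
      using n rows a0 assms(3) p L density
      by (intro reg_loss_grad_concentration) (auto simp: N0_def)
  qed (use a0 assms(3) in \<open>auto intro!: add_pos_pos\<close>)
qed

end
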